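(* In an absolute matrix order unit space $\mathbb{X},$ let $p \in \mathbb{OP}_l(\mathbb{X})$ with $p\neq 0.$ Then $\Vert p \Vert_l = 1.$
   Context: $(\mathbb{X},\{\mathbb{M}_m(\mathbb{X})^+\},\{\vert\cdot\vert_{l,m}\},e)$ is an absolute matrix order unit space with matrix norms $\Vert\cdot\Vert_l$ determined by $e$. $\mathbb{OP}_l(\mathbb{X})$ is the set of order projections in $\mathbb{M}_l(\mathbb{X})$: self-adjoint $p$ with $\vert 2p-e^l\vert_l=e^l$, where $e^l$ is the $l$-fold block-diagonal sum of $e$. *)

theory Defs
  imports "HOL-Analysis.Analysis" "HOL-Library.Function_Algebras"
begin

text \<open>An m x n matrix over 'a is a function nat => nat => 'a vanishing outside
  the index range {0..<m} x {0..<n}.  Indices start at 0.\<close>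

type_synonym 'a mtx = "nat \<Rightarrow> nat \<Rightarrow> 'a"

definition mats :: "nat \<Rightarrow> nat \<Rightarrow> ('a::zero) mtx set" where
  "mats m n = {A. \<forall>i j. (m \<le> i \<or> n \<le> j) \<longrightarrow> A i j = 0}"

definition mstar :: "('a \<Rightarrow> 'a) \<Rightarrow> 'a mtx \<Rightarrow> 'a mtx" where
  "mstar st A = (\<lambda>i j. st (A j i))"

definition cadj :: "complex mtx \<Rightarrow> complex mtx" where
  "cadj \<alpha> = (\<lambda>i j. cnj (\<alpha> j i))"

definition lmult :: "(complex \<Rightarrow> 'a \<Rightarrow> 'a) \<Rightarrow> nat \<Rightarrow> nat \<Rightarrow> nat \<Rightarrow> complex mtx \<Rightarrow> ('a::ab_group_add) mtx \<Rightarrow> 'a mtx" where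
  "lmult sm r m n \<alpha> A = (\<lambda>i j. if i < r \<and> j < n then (\<Sum>k<m. sm (\<alpha> i k) (A k j)) else 0)"

definition rmult :: "(complex \<Rightarrow> 'a \<Rightarrow> 'a) \<Rightarrow> nat \<Rightarrow> nat \<Rightarrow> nat \<Rightarrow> ('a::ab_group_add) mtx \<Rightarrow> complex mtx \<Rightarrow> 'a mtx" where
  "rmult sm m n s A \<beta> = (\<lambda>i j. if i < m \<and> j < s then (\<Sum>k<n. sm (\<beta> k j) (A i k)) else 0)"

definition cmat_norm :: "nat \<Rightarrow> nat \<Rightarrow> complex mtx \<Rightarrow> real" where
  "cmat_norm r m \<alpha> = Sup {sqrt (\<Sum>i<r. (cmod (\<Sum>k<m. \<alpha> i k * x k))\<^sup>2) | x.
                          (\<Sum>k<m. (cmod (x k))\<^sup>2) \<le> 1}"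

definition dsum :: "nat \<Rightarrow> nat \<Rightarrow> nat \<Rightarrow> nat \<Rightarrow> ('a::zero) mtx \<Rightarrow> 'a mtx \<Rightarrow> 'a mtx" where
  "dsum m n r s A B = (\<lambda>i j. if i < m \<and> j < n then A i j
       else if m \<le> i \<and> i < m + r \<and> n \<le> j \<and> j < n + s then B (i - m) (j - n) else 0)"

definition block2 :: "nat \<Rightarrow> ('a::zero) mtx \<Rightarrow> 'a mtx \<Rightarrow> 'a mtx \<Rightarrow> 'a mtx \<Rightarrow> 'a mtx" where
  "block2 n A B C D = (\<lambda>i j.
      if i < n \<and> j < n then A i j
      else if i < n \<and> n \<le> j \<and> j < 2*n then B i (j - n)
      else if n \<le> i \<and> i < 2*n \<and> j < n then C (i - n) j
      else if n \<le> i \<and> i < 2*n \<and> n \<le> j \<and> j < 2*n then D (i - n) (j - n)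
      else 0)"

definition rsc :: "(complex \<Rightarrow> 'a \<Rightarrow> 'a) \<Rightarrow> real \<Rightarrow> 'a mtx \<Rightarrow> 'a mtx" where
  "rsc sm k A = (\<lambda>i j. sm (complex_of_real k) (A i j))"

text \<open>e^n: the n-fold block diagonal sum of e.\<close>
definition ediag :: "nat \<Rightarrow> 'a::zero \<Rightarrow> 'a mtx" where
  "ediag n e = (\<lambda>i j. if i = j \<and> i < n then e else 0)"

definition msa :: "('a \<Rightarrow> 'a) \<Rightarrow> nat \<Rightarrow> ('a::zero) mtx set" where
  "msa st n = {A \<in> mats n n. mstar st A = A}"

text \<open>The space X is given by a type 'a with addition, a complex scalar multiplication
  sm, an involution st, cones P n = M_n(X)^+, absolute values absv m n = |.|_{m,n}
  and the unit e.\<close>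

definition mle :: "(nat \<Rightarrow> ('a::ab_group_add) mtx set) \<Rightarrow> nat \<Rightarrow> 'a mtx \<Rightarrow> 'a mtx \<Rightarrow> bool" where
  "mle P n A B \<longleftrightarrow> B - A \<in> P n"

text \<open>Matrix norm determined by e (Choi--Effros):
  ||v||_n = inf { k > 0 : [[k e^n, v], [v*, k e^n]] \<in> M_{2n}(X)^+ }.\<close>
definition mnorm :: "(complex \<Rightarrow> 'a \<Rightarrow> 'a) \<Rightarrow> ('a \<Rightarrow> 'a) \<Rightarrow> (nat \<Rightarrow> ('a::ab_group_add) mtx set)
    \<Rightarrow> 'a \<Rightarrow> nat \<Rightarrow> 'a mtx \<Rightarrow> real" where
  "mnorm sm st P e n v = Inf {k::real. 0 < k \<and>
      block2 n (rsc sm k (ediag n e)) v (mstar st v) (rsc sm k (ediag n e)) \<in> P (2*n)}"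

definition matrix_order_unit_space ::
  "(complex \<Rightarrow> 'a \<Rightarrow> 'a) \<Rightarrow> ('a::ab_group_add \<Rightarrow> 'a) \<Rightarrow> (nat \<Rightarrow> 'a mtx set) \<Rightarrow> 'a \<Rightarrow> bool" where
  "matrix_order_unit_space sm st P e \<longleftrightarrow>
     \<comment> \<open>X is a complex vector space\<close>
     Vector_Spaces.vector_space sm \<and>
     \<comment> \<open>* is a conjugate-linear involution\<close>
     (\<forall>x. st (st x) = x) \<and>
     (\<forall>x y. st (x + y) = st x + st y) \<and>
     (\<forall>c x. st (sm c x) = sm (cnj c) (st x)) \<and>
     \<comment> \<open>M_n(X)^+ is a proper cone of self-adjoint n x n matrices\<close>
     (\<forall>n. P n \<subseteq> msa st n) \<and>
     (\<forall>n. 0 \<in> P n) \<and>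
     (\<forall>n A B. A \<in> P n \<longrightarrow> B \<in> P n \<longrightarrow> A + B \<in> P n) \<and>
     (\<forall>n A (k::real). A \<in> P n \<longrightarrow> 0 \<le> k \<longrightarrow> rsc sm k A \<in> P n) \<and>
     (\<forall>n A. A \<in> P n \<longrightarrow> - A \<in> P n \<longrightarrow> A = 0) \<and>
     \<comment> \<open>matrix ordering: alpha* M_n(X)^+ alpha \<subseteq> M_m(X)^+ for alpha in M_{n,m}\<close>
     (\<forall>n m A \<alpha>. A \<in> P n \<longrightarrow> \<alpha> \<in> mats n m \<longrightarrow>
         rmult sm m n m (lmult sm m n n (cadj \<alpha>) A) \<alpha> \<in> P m) \<and>
     \<comment> \<open>e^n is an order unit of M_n(X)_sa\<close>
     (\<forall>n v. v \<in> msa st n \<longrightarrow> (\<exists>k>0. rsc sm k (ediag n e) - v \<in> P n)) \<and>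
     \<comment> \<open>e^n is Archimedean\<close>
     (\<forall>n v. v \<in> msa st n \<longrightarrow> (\<forall>k>0. rsc sm k (ediag n e) + v \<in> P n) \<longrightarrow> v \<in> P n)"

definition aorth :: "(nat \<Rightarrow> nat \<Rightarrow> ('a::ab_group_add) mtx \<Rightarrow> 'a mtx) \<Rightarrow> nat \<Rightarrow> 'a mtx \<Rightarrow> 'a mtx \<Rightarrow> bool" where
  "aorth absv n u v \<longleftrightarrow> absv n n (u - v) = u + v"

definition inf_orth :: "(complex \<Rightarrow> 'a \<Rightarrow> 'a) \<Rightarrow> ('a \<Rightarrow> 'a) \<Rightarrow> (nat \<Rightarrow> ('a::ab_group_add) mtx set)
    \<Rightarrow> 'a \<Rightarrow> nat \<Rightarrow> 'a mtx \<Rightarrow> 'a mtx \<Rightarrow> bool" where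
  "inf_orth sm st P e n u v \<longleftrightarrow>
     (\<forall>a b::real. mnorm sm st P e n (rsc sm a u + rsc sm b v) =
                  max (mnorm sm st P e n (rsc sm a u)) (mnorm sm st P e n (rsc sm b v)))"

definition abs_inf_orth :: "(complex \<Rightarrow> 'a \<Rightarrow> 'a) \<Rightarrow> ('a \<Rightarrow> 'a) \<Rightarrow> (nat \<Rightarrow> ('a::ab_group_add) mtx set)
    \<Rightarrow> 'a \<Rightarrow> nat \<Rightarrow> 'a mtx \<Rightarrow> 'a mtx \<Rightarrow> bool" where
  "abs_inf_orth sm st P e n u v \<longleftrightarrow>
     (\<forall>u1 v1. u1 \<in> P n \<longrightarrow> mle P n u1 u \<longrightarrow> v1 \<in> P n \<longrightarrow> mle P n v1 v \<longrightarrow>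
        inf_orth sm st P e n u1 v1)"

text \<open>(M_n(X)_sa, M_n(X)^+, |.|_{n,n}, e^n) is an absolute order unit space.\<close>
definition abs_ou_level ::
  "(complex \<Rightarrow> 'a \<Rightarrow> 'a) \<Rightarrow> ('a \<Rightarrow> 'a) \<Rightarrow> (nat \<Rightarrow> ('a::ab_group_add) mtx set)
    \<Rightarrow> (nat \<Rightarrow> nat \<Rightarrow> 'a mtx \<Rightarrow> 'a mtx) \<Rightarrow> 'a \<Rightarrow> nat \<Rightarrow> bool" where
  "abs_ou_level sm st P absv e n \<longleftrightarrow>
     (\<forall>v. v \<in> P n \<longrightarrow> absv n n v = v) \<and>
     (\<forall>v. v \<in> msa st n \<longrightarrow> absv n n v + v \<in> P n \<and> absv n n v - v \<in> P n) \<and>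
     (\<forall>v (k::real). v \<in> msa st n \<longrightarrow> absv n n (rsc sm k v) = rsc sm \<bar>k\<bar> (absv n n v)) \<and>
     (\<forall>u v w. u \<in> P n \<longrightarrow> v \<in> P n \<longrightarrow> w \<in> P n \<longrightarrow> aorth absv n u v \<longrightarrow> mle P n w v
        \<longrightarrow> aorth absv n u w) \<and>
     (\<forall>u v w. u \<in> P n \<longrightarrow> v \<in> P n \<longrightarrow> w \<in> P n \<longrightarrow> aorth absv n u v \<longrightarrow> aorth absv n u w
        \<longrightarrow> aorth absv n u (absv n n (v + w)) \<and> aorth absv n u (absv n n (v - w))) \<and>
     (\<forall>u v. u \<in> P n \<longrightarrow> v \<in> P n \<longrightarrow> (aorth absv n u v \<longleftrightarrow> abs_inf_orth sm st P e n u v))"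

definition absolute_matrix_order_unit_space ::
  "(complex \<Rightarrow> 'a \<Rightarrow> 'a) \<Rightarrow> ('a::ab_group_add \<Rightarrow> 'a) \<Rightarrow> (nat \<Rightarrow> 'a mtx set)
    \<Rightarrow> (nat \<Rightarrow> nat \<Rightarrow> 'a mtx \<Rightarrow> 'a mtx) \<Rightarrow> 'a \<Rightarrow> bool" where
  "absolute_matrix_order_unit_space sm st P absv e \<longleftrightarrow>
     matrix_order_unit_space sm st P e \<and>
     (\<forall>m n v. v \<in> mats m n \<longrightarrow> absv m n v \<in> P n) \<and>
     (\<forall>n. abs_ou_level sm st P absv e n) \<and>
     \<comment> \<open>|v \<oplus> w|_{m+r,n+s} = |v|_{m,n} \<oplus> |w|_{r,s}\<close>
     (\<forall>m n r s v w. v \<in> mats m n \<longrightarrow> w \<in> mats r s \<longrightarrow>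
        absv (m + r) (n + s) (dsum m n r s v w) = dsum n n s s (absv m n v) (absv r s w)) \<and>
     \<comment> \<open>|alpha v|_{r,n} \<le> ||alpha|| |v|_{m,n}\<close>
     (\<forall>r m n \<alpha> v. \<alpha> \<in> mats r m \<longrightarrow> v \<in> mats m n \<longrightarrow>
        mle P n (absv r n (lmult sm r m n \<alpha> v)) (rsc sm (cmat_norm r m \<alpha>) (absv m n v)))"

definition order_projections ::
  "(complex \<Rightarrow> 'a \<Rightarrow> 'a) \<Rightarrow> ('a \<Rightarrow> 'a) \<Rightarrow> (nat \<Rightarrow> nat \<Rightarrow> ('a::ab_group_add) mtx \<Rightarrow> 'a mtx)
    \<Rightarrow> 'a \<Rightarrow> nat \<Rightarrow> 'a mtx set" where
  "order_projections sm st absv e l =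
     {p \<in> msa st l. absv l l (rsc sm 2 p - ediag l e) = ediag l e}"

end

(* Write q = e^l - p.  The identity |2p - e^l| = e^l makes p and q positive and
   orthogonal, since |p - q| = |2p - e^l| = p + q.  With alpha = [I I] one has
   [[e^l, p], [p, e^l]] = alpha* p alpha + q (+) q >= 0, so ||p|| <= 1.  Conversely,
   if [[k e^l, p], [p, k e^l]] >= 0 with k < 1, compressing by [I; -I] gives
   p <= k e^l, hence (1 - k) p <= q.  Orthogonality is hereditary, so p is
   orthogonal to (1 - k) p, i.e. |k| p = |p - (1 - k) p| = (2 - k) p, which forces p = 0. *)

theory Submission
  imports Defs
begin

definition compress ::
  "(complex \<Rightarrow> 'a \<Rightarrow> 'a) \<Rightarrow> nat \<Rightarrow> nat \<Rightarrow> complex mtx \<Rightarrow> ('a::ab_group_add) mtx \<Rightarrow> 'a mtx" where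
  "compress sm n m \<alpha> A = rmult sm m n m (lmult sm m n n (cadj \<alpha>) A) \<alpha>"

text \<open>The l x 2l scalar matrix [I I].\<close>
definition row_id_id :: "nat \<Rightarrow> complex mtx" where
  "row_id_id l = (\<lambda>t i. if t < l \<and> (i = t \<or> i = t + l) then 1 else 0)"

text \<open>The 2l x l scalar matrix [I; -I].\<close>
definition col_id_neg_id :: "nat \<Rightarrow> complex mtx" where
  "col_id_neg_id l = (\<lambda>t i. if i < l \<and> t = i then 1 else if i < l \<and> t = i + l then -1 else 0)"

lemma row_id_id_mats: "row_id_id l \<in> mats l (2*l)"
  by (auto simp: mats_def row_id_id_def)

lemma col_id_neg_id_mats: "col_id_neg_id l \<in> mats (2*l) l"
  by (auto simp: mats_def col_id_neg_id_def)

lemma compress_entry: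
  "compress sm n m \<alpha> A i j =
    (if i < m \<and> j < m then (\<Sum>k<n. sm (\<alpha> k j) (\<Sum>t<n. sm (cnj (\<alpha> t i)) (A t k))) else 0)"
  unfolding compress_def rmult_def lmult_def cadj_def by (auto intro!: sum.cong)

lemma block2_entry:
  assumes "i < 2*l" "j < 2*l"
  shows "block2 l A A A A i j = A (i mod l) (j mod l)"
  using assms by (auto simp: block2_def le_mod_geq)

lemma dsum_mats:
  "v \<in> mats m n \<Longrightarrow> w \<in> mats r s \<Longrightarrow> dsum m n r s v w \<in> mats (m + r) (n + s)"
  by (auto simp: mats_def dsum_def)

locale complex_vector_space = vector_space sm for sm :: "complex \<Rightarrow> 'a::ab_group_add \<Rightarrow> 'a"
begin

lemma rsc_rsc [simp]: "rsc sm a (rsc sm b A) = rsc sm (a * b) A"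
  by (simp add: rsc_def fun_eq_iff)

lemma rsc_one [simp]: "rsc sm 1 A = A"
  by (simp add: rsc_def fun_eq_iff)

lemma scale_two: "sm 2 x = x + x"
  using scale_left_distrib[of 1 1 x] by simp

lemma rsc_two: "rsc sm 2 A = A + A"
  by (simp add: rsc_def fun_eq_iff scale_two)

lemma rsc_diff_left: "rsc sm (a - b) A = rsc sm a A - rsc sm b A"
  by (simp add: rsc_def fun_eq_iff scale_left_diff_distrib)

lemma rsc_eq_0_iff: "rsc sm a A = 0 \<longleftrightarrow> a = 0 \<or> A = 0"
  by (auto simp: rsc_def fun_eq_iff)

lemma rsc_ediag_mats: "rsc sm k (ediag n e) \<in> mats n n"
  by (simp add: mats_def rsc_def ediag_def)

lemma compress_row_id_id:
  "compress sm l (2*l) (row_id_id l) A = block2 l A A A A"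
proof (intro ext)
  fix i j
  have unit_col: "row_id_id l t i = (if t = i mod l then 1 else 0)" if "t < l" "i < 2*l" for t i
    using that by (cases "i < l") (auto simp: row_id_id_def le_mod_geq)
  have cnj_indicator: "cnj (if b then 1 else 0) = (if b then 1 else 0)" for b
    by simp
  have pick: "(\<Sum>t<l. sm (if t = a then 1 else 0) (x t)) = x a" if "a < l" for a x
  proof -
    have "(\<Sum>t<l. sm (if t = a then 1 else 0) (x t)) = (\<Sum>t<l. if t = a then x t else 0)"
      by (intro sum.cong) auto
    then show ?thesis
      using that by simp
  qed
  show "compress sm l (2*l) (row_id_id l) A i j = block2 l A A A A i j"
  proof (cases "i < 2*l \<and> j < 2*l")
    case True
    then have "l > 0" by auto
    with True show ?thesis
      by (simp add: compress_entry block2_entry unit_col pick cnj_indicator)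
  next
    case False
    then show ?thesis by (auto simp: compress_entry block2_def)
  qed
qed

lemma compress_col_id_neg_id:
  assumes "A \<in> mats l l" "B \<in> mats l l" "C \<in> mats l l" "D \<in> mats l l"
  shows "compress sm (2*l) l (col_id_neg_id l) (block2 l A B C D) = A - B - C + D"
proof (intro ext)
  fix i j
  have cnj_entry:
    "cnj (if b then 1 else if c then -1 else 0) = (if b then 1 else if c then -1 else 0)" for b c
    by simp
  have pick_diff:
    "(\<Sum>t<2*l. sm (if t = a then 1 else if t = a + l then -1 else 0) (x t)) = x a - x (a + l)"
    if "a < l" for a x
  proof -
    have "(\<Sum>t<2*l. sm (if t = a then 1 else if t = a + l then -1 else 0) (x t))
        = (\<Sum>t<2*l. (if t = a then x t else 0) - (if t = a + l then x t else 0))"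
      using that by (intro sum.cong) auto
    then show ?thesis
      using that by (simp add: sum_subtractf)
  qed
  show "compress sm (2*l) l (col_id_neg_id l) (block2 l A B C D) i j = (A - B - C + D) i j"
  proof (cases "i < l \<and> j < l")
    case True
    have col_entry: "col_id_neg_id l t i = (if t = i then 1 else if t = i + l then -1 else 0)"
      if "i < l" for t i
      using that by (simp add: col_id_neg_id_def)
    from True show ?thesis
      by (simp add: compress_entry col_entry cnj_entry pick_diff block2_def)
  next
    case False
    then show ?thesis
      using assms by (auto simp: compress_entry mats_def)
  qed
qed

end

locale abs_matrix_ou_space =
  fixes sm :: "complex \<Rightarrow> 'a::ab_group_add \<Rightarrow> 'a"
    and st :: "'a \<Rightarrow> 'a"
    and P :: "nat \<Rightarrow> 'a mtx set"
    and absv :: "nat \<Rightarrow> nat \<Rightarrow> 'a mtx \<Rightarrow> 'a mtx"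
    and e :: 'a
  assumes absolute_space: "absolute_matrix_order_unit_space sm st P absv e"
begin

lemmas space_axioms =
  absolute_space[unfolded absolute_matrix_order_unit_space_def matrix_order_unit_space_def]

sublocale complex_vector_space sm
  using space_axioms by (elim conjE) (rule complex_vector_space.intro)

lemma zero_in_cone: "0 \<in> P n"
  using space_axioms by simp

lemma cone_sa: "P n \<subseteq> msa st n"
  using space_axioms by simp

lemma order_unit: "v \<in> msa st n \<Longrightarrow> \<exists>k>0. rsc sm k (ediag n e) - v \<in> P n"
  using space_axioms by simp

lemma cone_add: "A \<in> P n \<Longrightarrow> B \<in> P n \<Longrightarrow> A + B \<in> P n"
  using space_axioms by simp

lemma cone_rsc: "A \<in> P n \<Longrightarrow> 0 \<le> k \<Longrightarrow> rsc sm k A \<in> P n"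
  using space_axioms by simp

lemma cone_compress: "A \<in> P n \<Longrightarrow> \<alpha> \<in> mats n m \<Longrightarrow> compress sm n m \<alpha> A \<in> P m"
  using space_axioms unfolding compress_def by simp

lemma abs_in_cone: "v \<in> mats m n \<Longrightarrow> absv m n v \<in> P n"
  using space_axioms by simp

lemma abs_dsum:
  "v \<in> mats m n \<Longrightarrow> w \<in> mats r s \<Longrightarrow>
    absv (m + r) (n + s) (dsum m n r s v w) = dsum n n s s (absv m n v) (absv r s w)"
  using space_axioms by simp

lemma abs_ou_levels: "abs_ou_level sm st P absv e n"
  using space_axioms by simp

lemma abs_of_cone: "v \<in> P n \<Longrightarrow> absv n n v = v"
  using abs_ou_levels[of n] unfolding abs_ou_level_def by (elim conjE) blast

lemma abs_plus_cone: "v \<in> msa st n \<Longrightarrow> absv n n v + v \<in> P n"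
  using abs_ou_levels[of n] unfolding abs_ou_level_def by (elim conjE) blast

lemma abs_minus_cone: "v \<in> msa st n \<Longrightarrow> absv n n v - v \<in> P n"
  using abs_ou_levels[of n] unfolding abs_ou_level_def by (elim conjE) blast

lemma abs_rsc: "v \<in> msa st n \<Longrightarrow> absv n n (rsc sm k v) = rsc sm \<bar>k\<bar> (absv n n v)"
  using abs_ou_levels[of n] unfolding abs_ou_level_def by (elim conjE) blast

lemma aorth_hereditary:
  "u \<in> P n \<Longrightarrow> v \<in> P n \<Longrightarrow> w \<in> P n \<Longrightarrow> aorth absv n u v \<Longrightarrow> mle P n w v \<Longrightarrow>
    aorth absv n u w"
  using abs_ou_levels[of n] unfolding abs_ou_level_def by (elim conjE) blast

lemma rsc_in_cone_iff: "0 < k \<Longrightarrow> rsc sm k A \<in> P n \<longleftrightarrow> A \<in> P n"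
  using cone_rsc[of "rsc sm k A" n "1/k"] cone_rsc[of A n k] by auto

lemma star_scale: "st (sm c x) = sm (cnj c) (st x)"
  using space_axioms by simp

lemma star_diff: "st (x - y) = st x - st y"
proof -
  interpret additive st
    using space_axioms by unfold_locales simp
  show ?thesis
    by (rule diff)
qed

lemma msa_mats: "A \<in> msa st n \<Longrightarrow> A \<in> mats n n"
  by (simp add: msa_def)

lemma msa_iff: "A \<in> msa st n \<longleftrightarrow> A \<in> mats n n \<and> (\<forall>i j. st (A j i) = A i j)"
  by (auto simp: msa_def mstar_def fun_eq_iff)

lemma msa_rsc: "A \<in> msa st n \<Longrightarrow> rsc sm k A \<in> msa st n"
  by (auto simp: msa_iff mats_def rsc_def star_scale)

lemma msa_diff: "A \<in> msa st n \<Longrightarrow> B \<in> msa st n \<Longrightarrow> A - B \<in> msa st n"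
  by (auto simp: msa_iff mats_def star_diff)

lemma ediag_sa: "ediag n e \<in> msa st n"
proof -
  have "0 \<in> msa st n"
    using zero_in_cone cone_sa by blast
  then obtain k where "k > 0" "rsc sm k (ediag n e) \<in> P n"
    using order_unit by force
  then have "rsc sm (1/k) (rsc sm k (ediag n e)) \<in> msa st n"
    using cone_sa msa_rsc by blast
  with \<open>k > 0\<close> show ?thesis
    by simp
qed

lemma dsum_in_cone: "v \<in> P m \<Longrightarrow> w \<in> P n \<Longrightarrow> dsum m m n n v w \<in> P (m + n)"
proof -
  assume v: "v \<in> P m" and w: "w \<in> P n"
  then have "v \<in> mats m m" "w \<in> mats n n"
    using cone_sa msa_mats by blast+
  then have "absv (m + n) (m + n) (dsum m m n n v w) \<in> P (m + n)"
    by (intro abs_in_cone dsum_mats)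
  then show ?thesis
    using \<open>v \<in> mats m m\<close> \<open>w \<in> mats n n\<close> by (simp add: abs_dsum abs_of_cone v w)
qed

lemma block_in_cone_imp_le_scaled_unit:
  assumes v: "v \<in> mats l l"
    and block: "block2 l (rsc sm k (ediag l e)) v v (rsc sm k (ediag l e)) \<in> P (2*l)"
  shows "rsc sm k (ediag l e) - v \<in> P l"
proof -
  have "compress sm (2*l) l (col_id_neg_id l)
      (block2 l (rsc sm k (ediag l e)) v v (rsc sm k (ediag l e)))
      = rsc sm 2 (rsc sm k (ediag l e) - v)"
    by (simp add: compress_col_id_neg_id v rsc_ediag_mats rsc_two)
  then have "rsc sm 2 (rsc sm k (ediag l e) - v) \<in> P l"
    using cone_compress[OF block col_id_neg_id_mats] by simp
  then show ?thesis
    by (simp add: rsc_in_cone_iff)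
qed

lemma order_projection_sa: "p \<in> order_projections sm st absv e l \<Longrightarrow> p \<in> msa st l"
  by (simp add: order_projections_def)

lemma order_projection_abs_reflection:
  "p \<in> order_projections sm st absv e l \<Longrightarrow> absv l l (rsc sm 2 p - ediag l e) = ediag l e"
  by (simp add: order_projections_def)

lemma order_projection_reflection_sa:
  "p \<in> order_projections sm st absv e l \<Longrightarrow> rsc sm 2 p - ediag l e \<in> msa st l"
  by (intro msa_diff msa_rsc order_projection_sa ediag_sa)

lemma order_projection_in_cone:
  assumes "p \<in> order_projections sm st absv e l"
  shows "p \<in> P l"
proof -
  have "ediag l e + (rsc sm 2 p - ediag l e) \<in> P l"
    using abs_plus_cone[OF order_projection_reflection_sa] assms
    by (simp add: order_projection_abs_reflection)
  then show ?thesis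
    by (simp add: rsc_in_cone_iff)
qed

lemma order_projection_complement_in_cone:
  assumes "p \<in> order_projections sm st absv e l"
  shows "ediag l e - p \<in> P l"
proof -
  have "ediag l e - (rsc sm 2 p - ediag l e) \<in> P l"
    using abs_minus_cone[OF order_projection_reflection_sa] assms
    by (simp add: order_projection_abs_reflection)
  moreover have "ediag l e - (rsc sm 2 p - ediag l e) = rsc sm 2 (ediag l e - p)"
    by (simp add: rsc_two)
  ultimately show ?thesis
    by (simp add: rsc_in_cone_iff)
qed

lemma order_projection_aorth_complement:
  assumes "p \<in> order_projections sm st absv e l"
  shows "aorth absv l p (ediag l e - p)"
  unfolding aorth_def using order_projection_abs_reflection[OF assms]
  by (simp add: rsc_two diff_diff_eq2)

lemma order_projection_unit_block_in_cone:
  assumes "p \<in> order_projections sm st absv e l"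
  shows "block2 l (ediag l e) p p (ediag l e) \<in> P (2*l)"
proof -
  let ?q = "ediag l e - p"
  have "block2 l (ediag l e) p p (ediag l e)
      = compress sm l (2*l) (row_id_id l) p + dsum l l l l ?q ?q"
    by (auto simp: compress_row_id_id block2_def dsum_def fun_eq_iff)
  moreover have "compress sm l (2*l) (row_id_id l) p \<in> P (2*l)"
    using cone_compress[OF order_projection_in_cone[OF assms] row_id_id_mats] .
  moreover have "dsum l l l l ?q ?q \<in> P (2*l)"
    using dsum_in_cone[OF order_projection_complement_in_cone[OF assms]
        order_projection_complement_in_cone[OF assms]] by (simp add: mult_2)
  ultimately show ?thesis
    by (simp add: cone_add)
qed

lemma order_projection_eq_0_if_le_scaled_unit:
  assumes p: "p \<in> order_projections sm st absv e l"
    and "k < 1" and below: "rsc sm k (ediag l e) - p \<in> P l"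
  shows "p = 0"
proof -
  let ?q = "ediag l e - p" and ?w = "rsc sm (1 - k) p"
  have p_cone: "p \<in> P l" and q_cone: "?q \<in> P l"
    using p by (rule order_projection_in_cone order_projection_complement_in_cone)+
  have w_cone: "?w \<in> P l"
    using cone_rsc[OF p_cone] \<open>k < 1\<close> by simp
  have "?q - ?w = (rsc sm k (ediag l e) - p) + rsc sm (1 - k) ?q"
    by (simp add: fun_eq_iff rsc_def scale_left_diff_distrib scale_right_diff_distrib)
  moreover have "(rsc sm k (ediag l e) - p) + rsc sm (1 - k) ?q \<in> P l"
    using cone_add[OF below cone_rsc[OF q_cone]] \<open>k < 1\<close> by simp
  ultimately have "mle P l ?w ?q"
    unfolding mle_def by metis
  then have "aorth absv l p ?w"
    using aorth_hereditary[OF p_cone q_cone w_cone order_projection_aorth_complement[OF p]] by blast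
  then have "absv l l (p - ?w) = p + ?w"
    by (simp add: aorth_def)
  moreover have "p - ?w = rsc sm k p" and "p + ?w = rsc sm (2 - k) p"
    by (simp_all add: fun_eq_iff rsc_def scale_left_diff_distrib scale_two)
  ultimately have "rsc sm \<bar>k\<bar> p = rsc sm (2 - k) p"
    using abs_rsc[OF order_projection_sa[OF p]] abs_of_cone[OF p_cone] by simp
  then have "rsc sm (2 - k - \<bar>k\<bar>) p = 0"
    by (simp add: rsc_diff_left)
  moreover have "2 - k - \<bar>k\<bar> \<noteq> 0"
    using \<open>k < 1\<close> by linarith
  ultimately show ?thesis
    by (simp add: rsc_eq_0_iff)
qed

lemma mnorm_order_projection:
  assumes p: "p \<in> order_projections sm st absv e l" and "p \<noteq> 0"
  shows "mnorm sm st P e l p = 1"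
proof -
  define S where "S = {k::real. 0 < k \<and>
      block2 l (rsc sm k (ediag l e)) p (mstar st p) (rsc sm k (ediag l e)) \<in> P (2*l)}"
  have p_star: "mstar st p = p"
    using order_projection_sa[OF p] by (simp add: msa_def)
  have "1 \<in> S"
    using order_projection_unit_block_in_cone[OF p] by (simp add: S_def p_star)
  moreover have "1 \<le> k" if "k \<in> S" for k
  proof (rule ccontr)
    assume "\<not> 1 \<le> k"
    moreover have "rsc sm k (ediag l e) - p \<in> P l"
      using \<open>k \<in> S\<close> order_projection_sa[OF p]
      by (intro block_in_cone_imp_le_scaled_unit) (auto simp: S_def p_star msa_mats)
    ultimately have "p = 0"
      using order_projection_eq_0_if_le_scaled_unit[OF p] by (meson not_le)
    with \<open>p \<noteq> 0\<close> show False ..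
  qed
  ultimately show ?thesis
    unfolding mnorm_def S_def[symmetric] by (rule cInf_eq_minimum)
qed

end

theorem proposition3p6:
  fixes sm :: "complex \<Rightarrow> 'a::ab_group_add \<Rightarrow> 'a"
    and st :: "'a \<Rightarrow> 'a"
    and P :: "nat \<Rightarrow> 'a mtx set"
    and absv :: "nat \<Rightarrow> nat \<Rightarrow> 'a mtx \<Rightarrow> 'a mtx"
    and e :: 'a and l :: nat and p :: "'a mtx"
  assumes "absolute_matrix_order_unit_space sm st P absv e"
    and "p \<in> order_projections sm st absv e l"
    and "p \<noteq> 0"
  shows "mnorm sm st P e l p = 1"
proof -
  interpret abs_matrix_ou_space sm st P absv e
    using assms(1) by (rule abs_matrix_ou_space.intro)
  show ?thesis
    using assms(2,3) by (rule mnorm_order_projection)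
qed

end
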